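(* There is an absolute constant $C > 0$ such that for every integer $L \geq 2$, every $m \geq 1$, every $\lambda \in [m]^{L+1}$ and all integers $0 \leq i < j \leq L$, every state on the path produced by running $\mathbf{Swap}(i, j)$ from $\lambda$ differs from $\lambda$ in at most $C \log L$ coordinates.
   Context: States are vectors $\lambda = (\lambda_0, \ldots, \lambda_L) \in [m]^{L+1}$, $[m] = \{1,\ldots,m\}$; coordinate $\ell$ is called level $\ell$. The recursive procedure $\mathbf{Swap}(i, j)$ for integers $0 \leq i \leq j \leq L$ acts on the current state as follows: if $j - i \leq 1$, it performs the single elementary operation "exchange the entries at levels $i$ and $j$"; otherwise, with $h = \lfloor (i + j)/2 \rfloor$, it performs $\mathbf{Swap}(i, h)$, then $\mathbf{Swap}(h, j)$, then $\mathbf{Swap}(i, h)$. The path produced from a starting state is the sequence consisting of the starting state followed by the state obtained after each elementary operation. Two states differ in a coordinate $\ell$ if their level-$\ell$ entries are unequal. *)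

theory Defs
  imports Complex_Main
begin

text \<open>States are lists of length L+1; entry l is level l.\<close>

text \<open>The sequence of elementary operations (pairs of levels to exchange) performed by Swap(i,j).\<close>
function swap_ops :: "nat \<Rightarrow> nat \<Rightarrow> (nat \<times> nat) list" where
  "swap_ops i j =
     (if j - i \<le> 1 then [(i, j)]
      else (let h = (i + j) div 2 in swap_ops i h @ swap_ops h j @ swap_ops i h))"
  by pat_completeness auto
termination
  by (relation "measure (\<lambda>(i, j). j - i)") auto

definition exch :: "nat \<times> nat \<Rightarrow> 'a list \<Rightarrow> 'a list" where
  "exch p s = (case p of (a, b) \<Rightarrow> s[a := s ! b, b := s ! a])"

fun run_path :: "'a list \<Rightarrow> (nat \<times> nat) list \<Rightarrow> 'a list list" where
  "run_path s [] = [s]"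
| "run_path s (p # ps) = s # run_path (exch p s) ps"

definition swap_path :: "'a list \<Rightarrow> nat \<Rightarrow> nat \<Rightarrow> 'a list list" where
  "swap_path s i j = run_path s (swap_ops i j)"

definition num_diff :: "nat \<Rightarrow> 'a list \<Rightarrow> 'a list \<Rightarrow> nat" where
  "num_diff L s t = card {l. l \<le> L \<and> s ! l \<noteq> t ! l}"

end

theory Submission
  imports Defs "HOL-Library.Log_Nat"
begin

text \<open>
  Swap(i, j) has the net effect of a single exchange of levels i and j. So if h is the midpoint,
  the three recursive calls Swap(i, h), Swap(h, j), Swap(i, h) start from states differing from
  the initial one in at most the levels i, h, j, and each runs on an interval of half the length.
  By induction, if j - i \<le> 2^k then every state on the path differs from the initial one in at
  most 3k + 2 levels; taking k = ceil (log2 (j - i)) gives the logarithmic bound.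
\<close>

definition diff_levels :: "'a list \<Rightarrow> 'a list \<Rightarrow> nat set" where
  "diff_levels t s = {l. l < length s \<and> t ! l \<noteq> s ! l}"

lemma finite_diff_levels [simp]: "finite (diff_levels t s)"
  by (simp add: diff_levels_def)

lemma num_diff_eq_card_diff_levels:
  "length s = Suc L \<Longrightarrow> num_diff L t s = card (diff_levels t s)"
  unfolding num_diff_def diff_levels_def by (metis less_Suc_eq_le)

lemma diff_levels_triangle:
  "length u = length s \<Longrightarrow> diff_levels t s \<subseteq> diff_levels t u \<union> diff_levels u s"
  by (auto simp: diff_levels_def)

lemma card_diff_levels_triangle:
  "length u = length s \<Longrightarrow> card (diff_levels t s) \<le> card (diff_levels t u) + card (diff_levels u s)"
  by (meson card_Un_le card_mono diff_levels_triangle finite_UnI finite_diff_levels order_trans)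

lemma length_exch [simp]: "length (exch p s) = length s"
  by (cases p) (simp add: exch_def)

lemma diff_levels_exch: "diff_levels (exch (a, b) s) s \<subseteq> {a, b}"
  unfolding diff_levels_def exch_def by (auto intro: ccontr simp: nth_list_update_neq)

lemma in_set_run_path: "s \<in> set (run_path s ps)"
  by (cases ps) auto

lemma set_run_path_append:
  "set (run_path s (ps @ qs)) = set (run_path s ps) \<union> set (run_path (fold exch ps s) qs)"
  by (induction ps arbitrary: s) (auto simp: in_set_run_path)

lemma swap_ops_base: "j - i \<le> 1 \<Longrightarrow> swap_ops i j = [(i, j)]"
  by (simp add: swap_ops.simps)

lemma swap_ops_split:
  "1 < j - i \<Longrightarrow> h = (i + j) div 2 \<Longrightarrow> swap_ops i j = swap_ops i h @ swap_ops h j @ swap_ops i h"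
  by (simp add: swap_ops.simps[of i j] Let_def)

declare swap_ops.simps [simp del]

lemma fold_exch_swap_ops:
  "i \<le> j \<Longrightarrow> j < length s \<Longrightarrow> fold exch (swap_ops i j) s = exch (i, j) s"
proof (induction i j arbitrary: s rule: swap_ops.induct)
  case (1 i j)
  show ?case
  proof (cases "j - i \<le> 1")
    case True
    then show ?thesis by (simp add: swap_ops_base)
  next
    case False
    define h where "h = (i + j) div 2"
    have "i < h" "h < j" using False by (auto simp: h_def)
    with "1.IH"[OF False h_def] "1.prems"
    have "fold exch (swap_ops i j) s = exch (i, h) (exch (h, j) (exch (i, h) s))"
      using False by (simp add: swap_ops_split[OF _ h_def])
    also have "\<dots> = exch (i, j) s"
      using \<open>i < h\<close> \<open>h < j\<close> "1.prems" by (auto simp: exch_def list_eq_iff_nth_eq nth_list_update)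
    finally show ?thesis .
  qed
qed

lemma card_diff_levels_swap_path_base:
  assumes "j - i \<le> 1" "t \<in> set (swap_path s i j)"
  shows "card (diff_levels t s) \<le> 2"
proof -
  have "t = s \<or> t = exch (i, j) s"
    using assms by (simp add: swap_path_def swap_ops_base)
  then have "diff_levels t s \<subseteq> {i, j}"
    using diff_levels_exch by (auto simp: diff_levels_def)
  then have "card (diff_levels t s) \<le> card {i, j}"
    by (intro card_mono) simp_all
  then show ?thesis
    by (simp add: card_insert_if split: if_splits)
qed

lemma card_diff_levels_swap_path_pow:
  assumes "i \<le> j" "j < length s" "j - i \<le> 2 ^ k" "t \<in> set (swap_path s i j)"
  shows "card (diff_levels t s) \<le> 3 * k + 2"
  using assms
proof (induction k arbitrary: i j s t)
  case 0
  then show ?case using card_diff_levels_swap_path_base[of j i t s] by simp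
next
  case (Suc k)
  show ?case
  proof (cases "j - i \<le> 1")
    case True
    then show ?thesis using Suc.prems(4) card_diff_levels_swap_path_base[of j i t s] by simp
  next
    case False
    define h where "h = (i + j) div 2"
    have h: "i < h" "h < j" "h - i \<le> 2 ^ k" "j - h \<le> 2 ^ k"
      using False Suc.prems(3) by (auto simp: h_def)
    define s1 where "s1 = exch (i, h) s"
    define s2 where "s2 = exch (h, j) s1"
    have len: "length s1 = length s" "length s2 = length s"
      by (simp_all add: s1_def s2_def)
    have "card (diff_levels s1 s) \<le> card {i, h}"
      using diff_levels_exch unfolding s1_def by (intro card_mono) simp_all
    then have s1: "card (diff_levels s1 s) \<le> 2"
      by (simp add: card_insert_if split: if_splits)
    have "diff_levels s2 s \<subseteq> {i, h, j}"
      using diff_levels_triangle[of s1 s s2] diff_levels_exch[of h j s1] diff_levels_exch[of i h s] len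
      by (auto simp: s1_def s2_def)
    then have "card (diff_levels s2 s) \<le> card {i, h, j}"
      by (intro card_mono) simp_all
    then have s2: "card (diff_levels s2 s) \<le> 3"
      by (simp add: card_insert_if split: if_splits)
    have "fold exch (swap_ops i h) s = s1" "fold exch (swap_ops h j) s1 = s2"
      using h Suc.prems(2) len by (simp_all add: fold_exch_swap_ops s1_def s2_def)
    then consider
        "t \<in> set (swap_path s i h)" | "t \<in> set (swap_path s1 h j)" | "t \<in> set (swap_path s2 i h)"
      using Suc.prems(4) False
      by (auto simp: swap_path_def swap_ops_split[OF _ h_def] set_run_path_append)
    then show ?thesis
    proof cases
      case 1
      then show ?thesis using Suc.IH[of i h s t] h Suc.prems(2) by simp
    next
      case 2
      then have "card (diff_levels t s1) \<le> 3 * k + 2"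
        using Suc.IH[of h j s1 t] h Suc.prems(2) len by simp
      then show ?thesis using card_diff_levels_triangle[of s1 s t] s1 len by simp
    next
      case 3
      then have "card (diff_levels t s2) \<le> 3 * k + 2"
        using Suc.IH[of i h s2 t] h Suc.prems(2) len by simp
      then show ?thesis using card_diff_levels_triangle[of s2 s t] s2 len by simp
    qed
  qed
qed

lemma card_diff_levels_swap_path:
  "i \<le> j \<Longrightarrow> j < length s \<Longrightarrow> t \<in> set (swap_path s i j) \<Longrightarrow>
    card (diff_levels t s) \<le> 3 * ceillog2 (j - i) + 2"
  by (rule card_diff_levels_swap_path_pow) (simp_all add: le_two_power_ceillog2)

theorem lemma2:
  shows "\<exists>C::real. C > 0 \<and>
    (\<forall>L::nat. \<forall>m::nat. \<forall>lam::nat list. \<forall>i j::nat.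
       L \<ge> 2 \<longrightarrow> m \<ge> 1 \<longrightarrow> length lam = L + 1 \<longrightarrow> set lam \<subseteq> {1..m} \<longrightarrow>
       i < j \<longrightarrow> j \<le> L \<longrightarrow>
       (\<forall>s \<in> set (swap_path lam i j). real (num_diff L s lam) \<le> C * ln (real L)))"
proof (intro exI[of _ "8 / ln 2"] conjI allI impI ballI)
  fix L m :: nat and lam :: "nat list" and i j :: nat and s
  assume L: "2 \<le> L" and "1 \<le> m" and len: "length lam = L + 1" and "set lam \<subseteq> {1..m}"
    and "i < j" and "j \<le> L" and s: "s \<in> set (swap_path lam i j)"
  have "1 \<le> log 2 (real L)"
    using L by simp
  have "num_diff L s lam = card (diff_levels s lam)"
    using len by (simp add: num_diff_eq_card_diff_levels)
  also have "\<dots> \<le> 3 * ceillog2 (j - i) + 2"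
    using \<open>i < j\<close> \<open>j \<le> L\<close> len by (intro card_diff_levels_swap_path[OF _ _ s]) simp_all
  also have "\<dots> \<le> 3 * ceillog2 L + 2"
    using \<open>j \<le> L\<close> by (simp add: ceillog2_mono)
  finally have "real (num_diff L s lam) \<le> 3 * real (ceillog2 L) + 2"
    by linarith
  also have "\<dots> \<le> 8 * log 2 (real L)"
    using ceillog2_less_log[of L] \<open>1 \<le> log 2 (real L)\<close> L by linarith
  also have "\<dots> = 8 / ln 2 * ln (real L)"
    by (simp add: log_def)
  finally show "real (num_diff L s lam) \<le> 8 / ln 2 * ln (real L)" .
qed simp

end
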